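(* If $X \subset S^{\mathbb{Z}}$ is a one-dimensional sofic shift, then its Cantor–Bendixson derivative $X^{(1)}$ is also a sofic shift.
   Context: A one-dimensional subshift over a finite alphabet $S$ is a closed, shift-invariant subset of $S^{\mathbb{Z}}$. A sofic shift is the image of a subshift of finite type (a subshift defined by a finite set of forbidden words) under a block map (a continuous shift-commuting map). The Cantor–Bendixson derivative $X^{(1)} = X'$ is the set of non-isolated points of $X$, i.e. $\{x \in X \mid x \in \overline{X \setminus \{x\}}\}$. *)

theory Defs
  imports "HOL-Analysis.Analysis"
begin

definition fullshift_top :: "'a set \<Rightarrow> (int \<Rightarrow> 'a) topology" where
  "fullshift_top A = product_topology (\<lambda>_::int. discrete_topology A) UNIV"

definition shift :: "(int \<Rightarrow> 'a) \<Rightarrow> (int \<Rightarrow> 'a)" where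
  "shift x = (\<lambda>i. x (i + 1))"

definition occurs_at :: "'a list \<Rightarrow> (int \<Rightarrow> 'a) \<Rightarrow> int \<Rightarrow> bool" where
  "occurs_at w x i \<longleftrightarrow> (\<forall>k < length w. x (i + int k) = w ! k)"

definition subshift :: "'a set \<Rightarrow> (int \<Rightarrow> 'a) set \<Rightarrow> bool" where
  "subshift A X \<longleftrightarrow> closedin (fullshift_top A) X \<and> shift ` X = X"

definition shift_of_forbidden :: "'a set \<Rightarrow> 'a list set \<Rightarrow> (int \<Rightarrow> 'a) set" where
  "shift_of_forbidden A F = {x. (\<forall>i. x i \<in> A) \<and> (\<forall>w\<in>F. \<forall>i. \<not> occurs_at w x i)}"

definition SFT :: "'a set \<Rightarrow> (int \<Rightarrow> 'a) set \<Rightarrow> bool" where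
  "SFT A Y \<longleftrightarrow> (\<exists>F. finite F \<and> Y = shift_of_forbidden A F)"

definition block_map :: "'a set \<Rightarrow> (int \<Rightarrow> 'a) set \<Rightarrow> 'b set \<Rightarrow> ((int \<Rightarrow> 'a) \<Rightarrow> (int \<Rightarrow> 'b)) \<Rightarrow> bool" where
  "block_map A Y B f \<longleftrightarrow>
     continuous_map (subtopology (fullshift_top A) Y) (fullshift_top B) f \<and>
     (\<forall>y\<in>Y. f (shift y) = shift (f y))"

text \<open>Sofic shift over alphabet B: image of an SFT (over some finite alphabet, coded
as a finite set of natural numbers) under a block map.\<close>
definition sofic :: "'b set \<Rightarrow> (int \<Rightarrow> 'b) set \<Rightarrow> bool" where
  "sofic B X \<longleftrightarrow> (\<exists>(A::nat set) Y f. finite A \<and> SFT A Y \<and> block_map A Y B f \<and> X = f ` Y)"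

definition CB_derivative :: "'a set \<Rightarrow> (int \<Rightarrow> 'a) set \<Rightarrow> (int \<Rightarrow> 'a) set" where
  "CB_derivative S X = {x \<in> X. x \<in> (fullshift_top S) closure_of (X - {x})}"

end

theory Submission
  imports Defs
begin

text \<open>
  The proof works with vertex-labelled graphs: for a graph T and a labelling l, gshift T l is
  the set of label sequences of bi-infinite paths.  Left limit points are handled by reflection, and a disjoint union
    of graphs realises the union.
\<close>

definition agree :: "nat \<Rightarrow> (int \<Rightarrow> 'a) \<Rightarrow> (int \<Rightarrow> 'a) \<Rightarrow> bool" where
  "agree n x y \<longleftrightarrow> (\<forall>i. - int n \<le> i \<and> i \<le> int n \<longrightarrow> x i = y i)"

lemma agree_mono: "agree m x y \<Longrightarrow> n \<le> m \<Longrightarrow> agree n x y"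
  unfolding agree_def by fastforce

lemma agreeD: "agree n x y \<Longrightarrow> - int n \<le> i \<Longrightarrow> i \<le> int n \<Longrightarrow> x i = y i"
  unfolding agree_def by blast

lemma topspace_fullshift: "topspace (fullshift_top A) = {z. \<forall>i. z i \<in> A}"
  by (auto simp: fullshift_top_def PiE_UNIV_domain)

definition cylinder :: "'a set \<Rightarrow> int set \<Rightarrow> (int \<Rightarrow> 'a) \<Rightarrow> (int \<Rightarrow> 'a) set" where
  "cylinder A J x = {z. (\<forall>i. z i \<in> A) \<and> (\<forall>j\<in>J. z j = x j)}"

lemma openin_cylinder:
  assumes "finite J"
  shows "openin (fullshift_top A) (cylinder A J x)"
proof -
  have "cylinder A J x = PiE UNIV (\<lambda>j. if j \<in> J then {x j} \<inter> A else A)"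
  proof (rule set_eqI)
    fix z
    show "z \<in> cylinder A J x \<longleftrightarrow> z \<in> PiE UNIV (\<lambda>j. if j \<in> J then {x j} \<inter> A else A)"
      unfolding cylinder_def PiE_UNIV_domain Pi_iff mem_Collect_eq
    proof (intro iffI ballI conjI allI)
      fix i assume "(\<forall>i. z i \<in> A) \<and> (\<forall>j\<in>J. z j = x j)"
      then show "z i \<in> (if i \<in> J then {x i} \<inter> A else A)" by (cases "i \<in> J") (metis IntI singletonI, simp)
    next
      fix i assume "\<forall>i\<in>UNIV. z i \<in> (if i \<in> J then {x i} \<inter> A else A)"
      then show "z i \<in> A" by (metis IntD2 UNIV_I)
    next
      fix j assume "\<forall>i\<in>UNIV. z i \<in> (if i \<in> J then {x i} \<inter> A else A)" "j \<in> J"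
      then show "z j = x j" by (metis IntD1 UNIV_I singletonD)
    qed
  qed
  moreover have "finite {i. (if i \<in> J then {x i} \<inter> A else A) \<noteq> A}"
    by (rule finite_subset[OF _ assms]) auto
  ultimately show ?thesis
    unfolding fullshift_top_def by (simp add: openin_PiE_gen)
qed

lemma openin_finitely_determined:
  assumes "finite J" "P \<subseteq> topspace (fullshift_top A)"
    and "\<And>z z'. z \<in> P \<Longrightarrow> z' \<in> topspace (fullshift_top A) \<Longrightarrow> \<forall>j\<in>J. z j = z' j \<Longrightarrow> z' \<in> P"
  shows "openin (fullshift_top A) P"
proof (subst openin_subopen, intro ballI)
  fix z assume z: "z \<in> P"
  show "\<exists>U. openin (fullshift_top A) U \<and> z \<in> U \<and> U \<subseteq> P"
  proof (intro exI conjI)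
    show "openin (fullshift_top A) (cylinder A J z)" using openin_cylinder[OF assms(1)] .
    show "z \<in> cylinder A J z" using z assms(2) by (auto simp: cylinder_def topspace_fullshift)
    show "cylinder A J z \<subseteq> P" using assms(3)[OF z] by (auto simp: cylinder_def topspace_fullshift)
  qed
qed

lemma closedin_finitely_determined:
  assumes "finite J" "P \<subseteq> topspace (fullshift_top A)"
    and "\<And>z z'. z \<in> P \<Longrightarrow> z' \<in> topspace (fullshift_top A) \<Longrightarrow> \<forall>j\<in>J. z j = z' j \<Longrightarrow> z' \<in> P"
  shows "closedin (fullshift_top A) P"
  unfolding closedin_def
proof
  show "openin (fullshift_top A) (topspace (fullshift_top A) - P)"
  proof (rule openin_finitely_determined[OF assms(1)])
    fix z z' assume "z \<in> topspace (fullshift_top A) - P" "z' \<in> topspace (fullshift_top A)"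
      "\<forall>j\<in>J. z j = z' j"
    then show "z' \<in> topspace (fullshift_top A) - P" using assms(3)[of z' z] by auto
  qed blast
qed (fact assms(2))

lemma compact_space_fullshift: "finite A \<Longrightarrow> compact_space (fullshift_top A)"
  by (simp add: fullshift_top_def compact_space_product_topology compact_space_discrete_topology)

lemma openin_contains_central_cylinder:
  assumes "openin (fullshift_top A) U" "x \<in> U"
  obtains n where "\<And>z. z \<in> topspace (fullshift_top A) \<Longrightarrow> agree n z x \<Longrightarrow> z \<in> U"
proof -
  obtain V where V: "finite {i. V i \<noteq> A}" "x \<in> PiE UNIV V" "PiE UNIV V \<subseteq> U"
    using assms unfolding fullshift_top_def openin_product_topology_alt by force
  obtain n where n: "\<forall>m\<in>(\<lambda>j. nat \<bar>j\<bar>) ` {i. V i \<noteq> A}. m \<le> n"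
    using V(1) finite_nat_set_iff_bounded_le by blast
  have "z \<in> U" if z: "z \<in> topspace (fullshift_top A)" "agree n z x" for z
  proof -
    have "z j \<in> V j" for j
    proof (cases "V j = A")
      case True then show ?thesis using z(1) by (auto simp: topspace_fullshift)
    next
      case False
      then have "nat \<bar>j\<bar> \<le> n" using n by blast
      then have "z j = x j" using agreeD[OF z(2), of j] by linarith
      then show ?thesis using V(2) by (auto simp: PiE_UNIV_domain)
    qed
    then show "z \<in> U" using V(3) by (auto simp: PiE_UNIV_domain)
  qed
  then show ?thesis using that by blast
qed

text \<open>Koenig's lemma, by compactness of the full shift over the finite set Q: if paths of the
local relation P exist on every central block, then a bi-infinite one exists.\<close>
lemma konig_bi_infinite_path:
  assumes "finite Q"
    and "\<And>n::nat. \<exists>t. (\<forall>i. t i \<in> Q) \<and> (\<forall>i. - int n \<le> i \<and> i \<le> int n \<longrightarrow> P i (t i) (t (i+1)))"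
  obtains t where "\<And>i. t i \<in> Q" "\<And>i. P i (t i) (t (i+1))"
proof -
  define C where "C n = {t \<in> topspace (fullshift_top Q). \<forall>i. - int n \<le> i \<and> i \<le> int n \<longrightarrow> P i (t i) (t (i+1))}"
    for n :: nat
  have closed: "closedin (fullshift_top Q) (C n)" for n
    by (rule closedin_finitely_determined[of "{- int n .. int n + 1}"]) (auto simp: C_def)
  have nonempty: "C n \<noteq> {}" for n using assms(2)[of n] by (auto simp: C_def topspace_fullshift)
  have decreasing: "decseq C" unfolding decseq_def C_def by auto
  obtain t where "t \<in> (\<Inter>n. C n)"
    using compact_space_imp_nest[OF compact_space_fullshift[OF assms(1)] closed nonempty decreasing] by blast
  then have t: "t \<in> C n" for n by blast
  show ?thesis
  proof (rule that)
    show "t i \<in> Q" for i using t[of 0] by (auto simp: C_def topspace_fullshift)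
    show "P i (t i) (t (i+1))" for i
    proof -
      have "- int (nat \<bar>i\<bar>) \<le> i \<and> i \<le> int (nat \<bar>i\<bar>)" by linarith
      then show ?thesis using t[of "nat \<bar>i\<bar>"] unfolding C_def by blast
    qed
  qed
qed

definition translate :: "int \<Rightarrow> (int \<Rightarrow> 'a) \<Rightarrow> (int \<Rightarrow> 'a)" where
  "translate k x = (\<lambda>i. x (i + k))"

lemma translate_0 [simp]: "translate 0 x = x"
  by (simp add: translate_def)

lemma translate_translate: "translate a (translate b x) = translate (a + b) x"
  by (simp add: translate_def ac_simps)

lemma shift_translate: "shift (translate k x) = translate (k + 1) x"
  by (simp add: shift_def translate_def ac_simps)

lemma occurs_at_translate: "occurs_at w (translate k x) i \<longleftrightarrow> occurs_at w x (i + k)"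
  unfolding occurs_at_def translate_def by (simp add: ac_simps)

lemma translate_shift_of_forbidden:
  "x \<in> shift_of_forbidden A F \<Longrightarrow> translate k x \<in> shift_of_forbidden A F"
  unfolding shift_of_forbidden_def by (auto simp: occurs_at_translate) (auto simp: translate_def)

lemma shift_of_forbidden_subset_topspace: "shift_of_forbidden A F \<subseteq> topspace (fullshift_top A)"
  unfolding shift_of_forbidden_def topspace_fullshift by auto

lemma closedin_shift_of_forbidden: "closedin (fullshift_top A) (shift_of_forbidden A F)"
proof -
  let ?O = "\<lambda>(w, i). {z \<in> topspace (fullshift_top A). occurs_at w z i}"
  have "topspace (fullshift_top A) - shift_of_forbidden A F = \<Union>(?O ` (F \<times> UNIV))"
    unfolding shift_of_forbidden_def topspace_fullshift by auto
  moreover have "openin (fullshift_top A) (?O (w, i))" for w i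
    by (rule openin_finitely_determined[of "{i ..< i + int (length w)}"])
      (auto simp: occurs_at_def)
  ultimately show ?thesis
    unfolding closedin_def using shift_of_forbidden_subset_topspace[of A F] by (auto intro: openin_Union)
qed

lemma block_map_values:
  assumes "block_map A Y S f" "Y \<subseteq> topspace (fullshift_top A)" "y \<in> Y"
  shows "f y i \<in> S"
proof -
  have "f y \<in> topspace (fullshift_top S)"
    using assms unfolding block_map_def continuous_map by auto
  then show ?thesis by (simp add: topspace_fullshift)
qed

lemma commute_translate_nat:
  assumes "\<forall>y\<in>Y. f (shift y) = shift (f y)" "\<And>y k. y \<in> Y \<Longrightarrow> translate k y \<in> Y" "y \<in> Y"
  shows "f (translate (int m) y) = translate (int m) (f y)"
proof (induction m)
  case (Suc m)
  have "f (translate (int (Suc m)) y) = f (shift (translate (int m) y))"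
    by (simp add: shift_translate add.commute)
  also have "\<dots> = shift (f (translate (int m) y))" using assms by blast
  also have "\<dots> = translate (int (Suc m)) (f y)" using Suc by (simp add: shift_translate add.commute)
  finally show ?case .
qed simp

lemma commute_translate:
  assumes "\<forall>y\<in>Y. f (shift y) = shift (f y)" "\<And>y k. y \<in> Y \<Longrightarrow> translate k y \<in> Y" "y \<in> Y"
  shows "f (translate k y) = translate k (f y)"
proof (cases "k \<ge> 0")
  case True
  then obtain m where "k = int m" by (metis nonneg_eq_int)
  then show ?thesis using commute_translate_nat[OF assms] by simp
next
  case False
  then obtain m where m: "k + int m = 0" by (metis add.right_inverse nle_le neg_0_le_iff_le nonneg_eq_int)
  have "f y = f (translate (int m) (translate k y))" using m by (simp add: translate_translate ac_simps)
  also have "\<dots> = translate (int m) (f (translate k y))"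
    using commute_translate_nat[OF assms(1,2)] assms(2,3) by blast
  finally have "translate k (f y) = translate (k + int m) (f (translate k y))"
    by (simp add: translate_translate)
  then show ?thesis using m by simp
qed

lemma continuous_discrete_locally_determined:
  assumes g: "continuous_map (subtopology (fullshift_top A) Y) (discrete_topology B) g"
    and Y: "Y \<subseteq> topspace (fullshift_top A)" and y: "y \<in> Y"
  obtains n where "\<And>z. z \<in> Y \<Longrightarrow> agree n z y \<Longrightarrow> g z = g y"
proof -
  have "g y \<in> B" using g y Y unfolding continuous_map by auto
  then have "openin (subtopology (fullshift_top A) Y) {z \<in> topspace (subtopology (fullshift_top A) Y). g z \<in> {g y}}"
    using openin_continuous_map_preimage[OF g, of "{g y}"] by simp
  then obtain V where V: "openin (fullshift_top A) V" "{z \<in> Y. g z = g y} = V \<inter> Y"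
    using Y unfolding openin_subtopology by (auto simp: Int_absorb1)
  have "y \<in> V" using V(2) y by blast
  then obtain n where n: "\<And>z. z \<in> topspace (fullshift_top A) \<Longrightarrow> agree n z y \<Longrightarrow> z \<in> V"
    using openin_contains_central_cylinder[OF V(1)] by blast
  show ?thesis
  proof (rule that)
    fix z assume "z \<in> Y" "agree n z y"
    then have "z \<in> V \<inter> Y" using n Y by blast
    then show "g z = g y" using V(2) by blast
  qed
qed

lemma compact_uniformly_determined:
  assumes Y: "compactin (fullshift_top A) Y"
    and local: "\<And>y. y \<in> Y \<Longrightarrow> \<exists>n. \<forall>z\<in>Y. agree n z y \<longrightarrow> g z = g y"
  obtains r where "\<And>y y'. y \<in> Y \<Longrightarrow> y' \<in> Y \<Longrightarrow> agree r y y' \<Longrightarrow> g y = g y'"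
proof -
  define good where "good y n \<longleftrightarrow> (\<forall>z\<in>Y. agree n z y \<longrightarrow> g z = g y)" for y n
  define G where "G = {(y, n). y \<in> Y \<and> good y n}"
  define ball where "ball = (\<lambda>(y, n::nat). cylinder A {- int n .. int n} y)"
  have YA: "Y \<subseteq> topspace (fullshift_top A)" using Y compactin_subset_topspace by blast
  have opens: "\<And>U. U \<in> ball ` G \<Longrightarrow> openin (fullshift_top A) U"
    unfolding ball_def using openin_cylinder by auto
  have covers: "Y \<subseteq> \<Union>(ball ` G)"
  proof
    fix y assume y: "y \<in> Y"
    then obtain n where "good y n" using local unfolding good_def by blast
    then have "(y, n) \<in> G" using y unfolding G_def by simp
    moreover have "y \<in> ball (y, n)" using y YA unfolding ball_def cylinder_def topspace_fullshift by auto
    ultimately show "y \<in> \<Union>(ball ` G)" by blast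
  qed
  obtain \<F> where \<F>: "finite \<F>" "\<F> \<subseteq> ball ` G" "Y \<subseteq> \<Union>\<F>"
    using compactinD[OF Y opens covers] by blast
  obtain G' where G': "G' \<subseteq> G" "finite G'" "\<F> = ball ` G'"
    using finite_subset_image[OF \<F>(1,2)] by blast
  define r where "r = Max (insert 0 (snd ` G'))"
  have "g y = g y'" if yy: "y \<in> Y" "y' \<in> Y" "agree r y y'" for y y'
  proof -
    obtain c n where cn: "(c, n) \<in> G'" "y \<in> ball (c, n)" using \<F>(3) G'(3) yy(1) by auto
    have "n \<le> r" unfolding r_def using G'(2) cn(1) by (auto intro!: Max_ge simp: image_iff) (metis snd_conv)
    then have "agree n y y'" using agree_mono[OF yy(3)] by blast
    moreover have "agree n y c" using cn(2) unfolding ball_def cylinder_def agree_def by auto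
    ultimately have "agree n y' c" unfolding agree_def by auto
    moreover have "good c n" using cn(1) G'(1) unfolding G_def by auto
    ultimately have "g y' = g c" "g y = g c" using \<open>agree n y c\<close> yy(1,2) unfolding good_def by blast+
    then show "g y = g y'" by simp
  qed
  then show ?thesis using that by blast
qed

text \<open>Curtis-Hedlund-Lyndon, the half we need: a block map on an SFT over a finite alphabet
is given by a local rule of some finite radius r.\<close>
lemma block_map_local_rule:
  assumes "finite A" "Y = shift_of_forbidden A F" "block_map A Y S f"
  obtains r where "\<And>y y'. y \<in> Y \<Longrightarrow> y' \<in> Y \<Longrightarrow> agree r y y' \<Longrightarrow> f y 0 = f y' 0"
proof -
  have compact: "compactin (fullshift_top A) Y"
    using closedin_compact_space[OF compact_space_fullshift[OF assms(1)] closedin_shift_of_forbidden] assms(2)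
    by simp
  have YA: "Y \<subseteq> topspace (fullshift_top A)"
    using assms(2) shift_of_forbidden_subset_topspace by blast
  have "continuous_map (subtopology (fullshift_top A) Y) (discrete_topology S) (\<lambda>y. f y 0)"
    using assms(3) unfolding block_map_def fullshift_top_def[of S] continuous_map_componentwise_UNIV by blast
  then have "\<exists>n. \<forall>z\<in>Y. agree n z y \<longrightarrow> f z 0 = f y 0" if "y \<in> Y" for y
    by (rule continuous_discrete_locally_determined[OF _ YA that]) blast
  from compact_uniformly_determined[OF compact this] show ?thesis using that by blast
qed

definition gpath :: "('q \<times> 'q) set \<Rightarrow> (int \<Rightarrow> 'q) \<Rightarrow> bool" where
  "gpath T s \<longleftrightarrow> (\<forall>i. (s i, s (i + 1)) \<in> T)"

definition gshift :: "('q \<times> 'q) set \<Rightarrow> ('q \<Rightarrow> 'b) \<Rightarrow> (int \<Rightarrow> 'b) set" where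
  "gshift T l = {(\<lambda>i. l (s i)) | s. gpath T s}"

lemma gpath_Domain: "gpath T s \<Longrightarrow> s i \<in> Domain T"
  unfolding gpath_def by blast

lemma gpath_translate: "gpath T s \<Longrightarrow> gpath T (translate k s)"
  unfolding gpath_def translate_def by (metis add.commute add.left_commute)

lemma gshift_subset_topspace: "l ` Domain T \<subseteq> S \<Longrightarrow> gshift T l \<subseteq> topspace (fullshift_top S)"
  unfolding gshift_def topspace_fullshift using gpath_Domain by fastforce

lemma continuous_coordinate:
  assumes "Y \<subseteq> topspace (fullshift_top A)" "\<And>y. y \<in> Y \<Longrightarrow> g (y k) \<in> B"
  shows "continuous_map (subtopology (fullshift_top A) Y) (discrete_topology B) (\<lambda>y. g (y k))"
  unfolding continuous_map
proof (intro conjI allI impI)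
  show "(\<lambda>y. g (y k)) ` topspace (subtopology (fullshift_top A) Y) \<subseteq> topspace (discrete_topology B)"
    using assms by auto
  fix U
  have "openin (fullshift_top A) {z \<in> topspace (fullshift_top A). g (z k) \<in> U}"
    by (rule openin_finitely_determined[of "{k}"]) auto
  moreover have "{y \<in> topspace (subtopology (fullshift_top A) Y). g (y k) \<in> U}
      = {z \<in> topspace (fullshift_top A). g (z k) \<in> U} \<inter> Y" using assms(1) by auto
  ultimately show "openin (subtopology (fullshift_top A) Y)
      {y \<in> topspace (subtopology (fullshift_top A) Y). g (y k) \<in> U}"
    by (auto simp: openin_subtopology)
qed

text \<open>The shift of a finite labelled graph is sofic: the paths form an SFT given by the forbidden
two-letter words that are not edges (states are coded as natural numbers), and reading the labels
is a one-block map.\<close>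
lemma gshift_sofic:
  fixes T :: "('q::countable \<times> 'q) set"
  assumes "finite T" "l ` Domain T \<subseteq> S"
  shows "sofic S (gshift T l)"
proof -
  define A where "A = to_nat ` Domain T"
  define Y where "Y = {(\<lambda>i. to_nat (s i)) | s. gpath T s}"
  define F where "F = {[a, b] | a b. a \<in> A \<and> b \<in> A \<and> (from_nat a, from_nat b) \<notin> T}"
  define f where "f = (\<lambda>(y::int \<Rightarrow> nat) i. l (from_nat (y i)))"
  have finA: "finite A" unfolding A_def using assms(1) by (simp add: finite_Domain)
  have "F \<subseteq> (\<lambda>(a, b). [a, b]) ` (A \<times> A)" unfolding F_def by auto
  then have finF: "finite F" using finA finite_subset by blast
  have YA: "Y \<subseteq> topspace (fullshift_top A)"
    unfolding Y_def topspace_fullshift A_def using gpath_Domain by fastforce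
  have "Y = shift_of_forbidden A F"
  proof
    show "Y \<subseteq> shift_of_forbidden A F"
    proof
      fix y assume "y \<in> Y"
      then obtain s where s: "gpath T s" "y = (\<lambda>i. to_nat (s i))" unfolding Y_def by blast
      have "\<not> occurs_at w y i" if "w \<in> F" for w i
      proof
        assume occ: "occurs_at w y i"
        from that obtain a b where w: "w = [a, b]" "(from_nat a, from_nat b) \<notin> T" unfolding F_def by blast
        have "y i = a" "y (i + 1) = b" using occ unfolding w occurs_at_def
          by (auto dest: spec[of _ 0] spec[of _ 1])
        then show False using w s unfolding gpath_def by auto
      qed
      then show "y \<in> shift_of_forbidden A F"
        using YA \<open>y \<in> Y\<close> unfolding shift_of_forbidden_def topspace_fullshift by auto
    qed
  next
    show "shift_of_forbidden A F \<subseteq> Y"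
    proof
      fix y assume y: "y \<in> shift_of_forbidden A F"
      define s where "s i = (from_nat (y i) :: 'q)" for i
      have "y i = to_nat (s i)" for i
      proof -
        have "y i \<in> A" using y unfolding shift_of_forbidden_def by auto
        then obtain q :: 'q where "y i = to_nat q" unfolding A_def by blast
        then show ?thesis unfolding s_def by simp
      qed
      then have ys: "y = (\<lambda>i. to_nat (s i))" by blast
      have "(s i, s (i + 1)) \<in> T" for i
      proof (rule ccontr)
        assume "(s i, s (i + 1)) \<notin> T"
        then have "[y i, y (i + 1)] \<in> F"
          using y unfolding F_def shift_of_forbidden_def s_def by auto
        moreover have "occurs_at [y i, y (i + 1)] y i" unfolding occurs_at_def by (auto simp: less_Suc_eq)
        ultimately show False using y unfolding shift_of_forbidden_def by blast
      qed
      then show "y \<in> Y" unfolding Y_def gpath_def using ys by blast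
    qed
  qed
  then have "SFT A Y" unfolding SFT_def using finF by blast
  moreover have "block_map A Y S f"
    unfolding block_map_def
  proof
    have labels: "\<And>y k. y \<in> Y \<Longrightarrow> l (from_nat (y k)) \<in> S"
      unfolding Y_def using assms(2) gpath_Domain by fastforce
    show "continuous_map (subtopology (fullshift_top A) Y) (fullshift_top S) f"
      unfolding fullshift_top_def[of S] continuous_map_componentwise_UNIV
    proof
      fix k
      show "continuous_map (subtopology (fullshift_top A) Y) (discrete_topology S) (\<lambda>y. f y k)"
        unfolding f_def using continuous_coordinate[OF YA, of "\<lambda>a. l (from_nat a)" k S] labels by blast
    qed
    show "\<forall>y\<in>Y. f (shift y) = shift (f y)" unfolding f_def shift_def by auto
  qed
  moreover have "gshift T l = f ` Y"
    unfolding gshift_def Y_def f_def by (auto simp: image_def)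
  ultimately show ?thesis unfolding sofic_def using finA by blast
qed

definition window :: "nat \<Rightarrow> (int \<Rightarrow> 'a) \<Rightarrow> int \<Rightarrow> 'a list" where
  "window R y i = map (\<lambda>k. y (i - int R + int k)) [0..<2*R+1]"

lemma length_window [simp]: "length (window R y i) = 2*R+1"
  by (simp add: window_def)

lemma nth_window: "k < 2*R+1 \<Longrightarrow> window R y i ! k = y (i - int R + int k)"
  unfolding window_def by (simp del: upt_Suc)

lemma window_overlap: "k + 1 < 2*R+1 \<Longrightarrow> window R y i ! (k + 1) = window R y (i + 1) ! k"
  by (simp add: nth_window algebra_simps)

lemma window_eq_imp_agree:
  assumes "window R y i = window R y' i'"
  shows "agree R (translate i y) (translate i' y')"
  unfolding agree_def
proof (intro allI impI)
  fix j assume j: "- int R \<le> j \<and> j \<le> int R"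
  define k where "k = nat (j + int R)"
  have k: "k < 2*R+1" "int k = j + int R" unfolding k_def using j by auto
  have "window R y i ! k = window R y' i' ! k" using assms by simp
  then show "translate i y j = translate i' y' j"
    unfolding nth_window[OF k(1)] translate_def using k(2) by (simp add: ac_simps)
qed

lemma block_map_window_rule:
  assumes "finite A" "Y = shift_of_forbidden A F" "block_map A Y S f"
  obtains r where "\<And>R y y' i i'. r \<le> R \<Longrightarrow> y \<in> Y \<Longrightarrow> y' \<in> Y \<Longrightarrow>
    window R y i = window R y' i' \<Longrightarrow> f y i = f y' i'"
proof -
  obtain r where r: "\<And>y y'. y \<in> Y \<Longrightarrow> y' \<in> Y \<Longrightarrow> agree r y y' \<Longrightarrow> f y 0 = f y' 0"
    using block_map_local_rule[OF assms] by blast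
  have commute: "\<forall>y\<in>Y. f (shift y) = shift (f y)" using assms(3) unfolding block_map_def by blast
  have invariant: "\<And>y k. y \<in> Y \<Longrightarrow> translate k y \<in> Y"
    using assms(2) translate_shift_of_forbidden by blast
  have at_0: "f y i = f (translate i y) 0" if "y \<in> Y" for y i
    using commute_translate[OF commute invariant that] by (simp add: translate_def)
  show ?thesis
  proof (rule that)
    fix R y y' i i' assume "r \<le> R" "y \<in> Y" "y' \<in> Y" "window R y i = window R y' i'"
    then have "agree r (translate i y) (translate i' y')"
      using agree_mono window_eq_imp_agree by blast
    then have "f (translate i y) 0 = f (translate i' y') 0"
      using r invariant \<open>y \<in> Y\<close> \<open>y' \<in> Y\<close> by blast
    then show "f y i = f y' i'" using at_0 \<open>y \<in> Y\<close> \<open>y' \<in> Y\<close> by simp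
  qed
qed

lemma windows_glue:
  assumes len: "\<And>i. length (s i) = 2*R+1"
    and overlap: "\<And>i k. k + 1 < 2*R+1 \<Longrightarrow> s i ! (k + 1) = s (i + 1) ! k"
  shows "window R (\<lambda>p. s p ! R) i = s i"
proof -
  define z where "z p = s p ! R" for p
  have right: "s i ! (R + d) = z (i + int d)" if "R + d < 2*R+1" for d i
    using that
  proof (induction d arbitrary: i)
    case (Suc d)
    have "s i ! (R + Suc d) = s (i + 1) ! (R + d)" using overlap[of "R + d" i] Suc.prems by simp
    also have "\<dots> = z (i + int (Suc d))" using Suc by (simp add: ac_simps)
    finally show ?case .
  qed (simp add: z_def)
  have left: "s i ! (R - d) = z (i - int d)" if "d \<le> R" for d i
    using that
  proof (induction d arbitrary: i)
    case (Suc d)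
    have "s (i - 1) ! ((R - Suc d) + 1) = s i ! (R - Suc d)"
      using overlap[of "R - Suc d" "i - 1"] Suc.prems by simp
    then have "s i ! (R - Suc d) = s (i - 1) ! (R - d)" using Suc.prems by (simp add: Suc_diff_Suc)
    also have "\<dots> = z (i - int (Suc d))" using Suc by (simp add: diff_diff_eq)
    finally show ?case .
  qed (simp add: z_def)
  have "s i ! k = z (i - int R + int k)" if "k < 2*R+1" for k
  proof (cases "R \<le> k")
    case True
    then show ?thesis using right[of "k - R" i] that by (simp add: of_nat_diff algebra_simps)
  next
    case False
    then show ?thesis using left[of "R - k" i] by (simp add: of_nat_diff algebra_simps)
  qed
  then show ?thesis unfolding z_def[symmetric]
    by (intro nth_equalityI) (simp_all add: len nth_window)
qed

lemma shift_of_forbidden_by_windows: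
  assumes short: "\<forall>w\<in>F. length w \<le> 2*R+1"
    and windows: "\<And>i. \<exists>y\<in>shift_of_forbidden A F. \<exists>j. window R z i = window R y j"
  shows "z \<in> shift_of_forbidden A F"
  unfolding shift_of_forbidden_def mem_Collect_eq
proof (intro conjI allI ballI notI)
  fix p
  obtain y j where y: "y \<in> shift_of_forbidden A F" "window R z p = window R y j" using windows by blast
  have "z p = window R z p ! R" by (simp add: nth_window)
  also have "\<dots> = y j" using y(2) by (simp add: nth_window)
  finally show "z p \<in> A" using y(1) unfolding shift_of_forbidden_def by simp
next
  fix w p assume w: "w \<in> F" and occ: "occurs_at w z p"
  obtain y j where y: "y \<in> shift_of_forbidden A F" "window R z (p + int R) = window R y j"
    using windows by blast
  have "occurs_at w y (j - int R)" unfolding occurs_at_def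
  proof (intro allI impI)
    fix k assume k: "k < length w"
    then have kR: "k < 2*R+1" using short w by fastforce
    have "y (j - int R + int k) = window R y j ! k" by (simp add: nth_window[OF kR])
    also have "\<dots> = window R z (p + int R) ! k" using y(2) by simp
    also have "\<dots> = z (p + int k)" by (simp add: nth_window[OF kR])
    also have "\<dots> = w ! k" using occ k unfolding occurs_at_def by blast
    finally show "y (j - int R + int k) = w ! k" .
  qed
  then show False using y(1) w unfolding shift_of_forbidden_def by blast
qed

definition window_graph :: "nat \<Rightarrow> (int \<Rightarrow> 'a) set \<Rightarrow> ('a list \<times> 'a list) set" where
  "window_graph R Y = {(window R y i, window R y (i + 1)) | y i. y \<in> Y}"

lemma finite_window_graph:
  assumes "finite A" "Y \<subseteq> topspace (fullshift_top A)"
  shows "finite (window_graph R Y)"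
proof -
  have "set (window R y i) \<subseteq> A" if "y \<in> Y" for y i
    using that assms(2) unfolding window_def topspace_fullshift by auto
  then have "window_graph R Y \<subseteq>
      {w. set w \<subseteq> A \<and> length w = 2*R+1} \<times> {w. set w \<subseteq> A \<and> length w = 2*R+1}"
    unfolding window_graph_def by auto
  then show ?thesis using finite_lists_length_eq[OF assms(1)] finite_subset by blast
qed

lemma gpath_window_graph: "y \<in> Y \<Longrightarrow> gpath (window_graph R Y) (window R y)"
  unfolding gpath_def window_graph_def by blast

lemma window_graph_path_is_windows:
  assumes Y: "Y = shift_of_forbidden A F" and short: "\<forall>w\<in>F. length w \<le> 2*R+1"
    and s: "gpath (window_graph R Y) s"
  obtains z where "z \<in> Y" "window R z = s"
proof -
  have step: "\<exists>y\<in>Y. \<exists>j. s i = window R y j \<and> s (i + 1) = window R y (j + 1)" for i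
    using s unfolding gpath_def window_graph_def by blast
  define z where "z p = s p ! R" for p
  have windows: "window R z i = s i" for i
    unfolding z_def
  proof (rule windows_glue)
    show "length (s i) = 2*R+1" for i using step[of i] by auto
    show "s i ! (k + 1) = s (i + 1) ! k" if "k + 1 < 2*R+1" for i k
      using step[of i] window_overlap[OF that] by auto
  qed
  moreover have "z \<in> Y"
    unfolding Y
  proof (rule shift_of_forbidden_by_windows[OF short])
    fix i
    obtain y j where "y \<in> Y" "s i = window R y j" using step[of i] by blast
    then show "\<exists>y\<in>shift_of_forbidden A F. \<exists>j. window R z i = window R y j"
      using windows[of i] Y by auto
  qed
  ultimately show ?thesis using that by blast
qed

text \<open>Higher block presentation: every sofic shift is the set of label sequences of bi-infinite
paths in a finite vertex-labelled graph.\<close>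
lemma sofic_graph_presentation:
  assumes "sofic S X"
  obtains T :: "(nat list \<times> nat list) set" and l where "finite T" "l ` Domain T \<subseteq> S" "X = gshift T l"
proof -
  obtain A Y f where AY: "finite (A::nat set)" "SFT A Y" "block_map A Y S f" "X = f ` Y"
    using assms unfolding sofic_def by blast
  obtain F where F: "finite F" "Y = shift_of_forbidden A F" using AY(2) unfolding SFT_def by blast
  obtain r where r: "\<And>R y y' i i'. r \<le> R \<Longrightarrow> y \<in> Y \<Longrightarrow> y' \<in> Y \<Longrightarrow>
      window R y i = window R y' i' \<Longrightarrow> f y i = f y' i'"
    using block_map_window_rule[OF AY(1) F(2) AY(3)] by blast
  obtain L where L: "\<forall>w\<in>F. length w \<le> L"
    using F(1) finite_nat_set_iff_bounded_le[of "length ` F"] by auto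
  define R where "R = r + L"
  define T where "T = window_graph R Y"
  define l where "l w = (SOME c. \<exists>y\<in>Y. \<exists>i. window R y i = w \<and> f y i = c)" for w
  have label: "l (window R y i) = f y i" if "y \<in> Y" for y i
  proof -
    have "\<exists>y'\<in>Y. \<exists>i'. window R y' i' = window R y i \<and> f y' i' = l (window R y i)"
      unfolding l_def by (rule someI_ex) (use that in blast)
    then obtain y' i' where "y' \<in> Y" "window R y' i' = window R y i" "f y' i' = l (window R y i)"
      by blast
    then show ?thesis using r[of R y' y i' i] that unfolding R_def by simp
  qed
  have YA: "Y \<subseteq> topspace (fullshift_top A)" using F(2) shift_of_forbidden_subset_topspace by blast
  have "finite T" unfolding T_def using finite_window_graph[OF AY(1) YA] .
  moreover have "l ` Domain T \<subseteq> S"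
    unfolding T_def window_graph_def using label block_map_values[OF AY(3) YA] by auto
  moreover have "X = gshift T l"
  proof
    show "X \<subseteq> gshift T l"
    proof
      fix x assume "x \<in> X"
      then obtain y where "y \<in> Y" "x = f y" using AY(4) by blast
      then have "gpath T (window R y)" "x = (\<lambda>i. l (window R y i))"
        unfolding T_def using gpath_window_graph label by auto
      then show "x \<in> gshift T l" unfolding gshift_def by blast
    qed
    show "gshift T l \<subseteq> X"
    proof
      fix x assume "x \<in> gshift T l"
      then obtain s where s: "gpath T s" "x = (\<lambda>i. l (s i))" unfolding gshift_def by blast
      have "\<forall>w\<in>F. length w \<le> 2*R+1" using L unfolding R_def by fastforce
      then obtain z where "z \<in> Y" "window R z = s"
        using window_graph_path_is_windows[OF F(2)] s(1) unfolding T_def by blast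
      then have "x = f z" using s(2) label by auto
      then show "x \<in> X" using AY(4) \<open>z \<in> Y\<close> by blast
    qed
  qed
  ultimately show ?thesis using that by blast
qed

lemma CB_derivative_iff:
  assumes "X \<subseteq> topspace (fullshift_top S)"
  shows "x \<in> CB_derivative S X \<longleftrightarrow> x \<in> X \<and> (\<forall>n. \<exists>v\<in>X. v \<noteq> x \<and> agree n v x)"
proof
  assume "x \<in> CB_derivative S X"
  then have x: "x \<in> X" and closure: "x \<in> (fullshift_top S) closure_of (X - {x})"
    unfolding CB_derivative_def by auto
  have "\<exists>v\<in>X. v \<noteq> x \<and> agree n v x" for n
  proof -
    have "openin (fullshift_top S) (cylinder S {- int n .. int n} x)" by (rule openin_cylinder) simp
    moreover have "x \<in> cylinder S {- int n .. int n} x"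
      using x assms by (auto simp: cylinder_def topspace_fullshift)
    ultimately obtain v where "v \<in> X - {x}" "v \<in> cylinder S {- int n .. int n} x"
      using closure unfolding in_closure_of by blast
    then show ?thesis by (auto simp: cylinder_def agree_def)
  qed
  with x show "x \<in> X \<and> (\<forall>n. \<exists>v\<in>X. v \<noteq> x \<and> agree n v x)" by blast
next
  assume x: "x \<in> X \<and> (\<forall>n. \<exists>v\<in>X. v \<noteq> x \<and> agree n v x)"
  have "x \<in> (fullshift_top S) closure_of (X - {x})"
    unfolding in_closure_of
  proof (intro conjI allI impI)
    show "x \<in> topspace (fullshift_top S)" using x assms by auto
    fix U assume U: "x \<in> U \<and> openin (fullshift_top S) U"
    then obtain n where n: "\<And>z. z \<in> topspace (fullshift_top S) \<Longrightarrow> agree n z x \<Longrightarrow> z \<in> U"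
      using openin_contains_central_cylinder by metis
    obtain v where "v \<in> X" "v \<noteq> x" "agree n v x" using x by blast
    then show "\<exists>y. y \<in> X - {x} \<and> y \<in> U" using n assms by blast
  qed
  then show "x \<in> CB_derivative S X" using x unfolding CB_derivative_def by blast
qed

definition right_limit :: "(int \<Rightarrow> 'a) set \<Rightarrow> (int \<Rightarrow> 'a) \<Rightarrow> bool" where
  "right_limit X x \<longleftrightarrow> x \<in> X \<and> (\<forall>n. \<exists>v\<in>X. agree n v x \<and> (\<exists>d > int n. v d \<noteq> x d))"

definition left_limit :: "(int \<Rightarrow> 'a) set \<Rightarrow> (int \<Rightarrow> 'a) \<Rightarrow> bool" where
  "left_limit X x \<longleftrightarrow> x \<in> X \<and> (\<forall>n. \<exists>v\<in>X. agree n v x \<and> (\<exists>d < - int n. v d \<noteq> x d))"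

lemma CB_derivative_eq_limits:
  assumes "X \<subseteq> topspace (fullshift_top S)"
  shows "CB_derivative S X = {x. right_limit X x} \<union> {x. left_limit X x}"
proof (intro set_eqI iffI)
  fix x assume "x \<in> CB_derivative S X"
  then have x: "x \<in> X" and approx: "\<And>n. \<exists>v\<in>X. v \<noteq> x \<and> agree n v x"
    using CB_derivative_iff[OF assms] by blast+
  have "right_limit X x" if "\<not> left_limit X x"
  proof -
    obtain n0 where n0: "\<And>v d. v \<in> X \<Longrightarrow> agree n0 v x \<Longrightarrow> d < - int n0 \<Longrightarrow> v d = x d"
      using \<open>\<not> left_limit X x\<close> x unfolding left_limit_def by blast
    have "\<exists>v\<in>X. agree n v x \<and> (\<exists>d > int n. v d \<noteq> x d)" for n
    proof -
      obtain v where v: "v \<in> X" "v \<noteq> x" "agree (max n n0) v x" using approx by blast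
      obtain d where d: "v d \<noteq> x d" using v(2) by blast
      have "agree n0 v x" "agree n v x" using agree_mono[OF v(3)] by simp_all
      then have "\<not> d < - int n0" using n0 v(1) d by blast
      have "d > int (max n n0)"
      proof (rule ccontr)
        assume "\<not> d > int (max n n0)"
        then have "- int (max n n0) \<le> d" "d \<le> int (max n n0)" using \<open>\<not> d < - int n0\<close> by linarith+
        then show False using agreeD[OF v(3)] d by blast
      qed
      then have "d > int n" by linarith
      then show ?thesis using v(1) d \<open>agree n v x\<close> by blast
    qed
    then show ?thesis unfolding right_limit_def using x by blast
  qed
  then show "x \<in> {x. right_limit X x} \<union> {x. left_limit X x}" by blast
next
  fix x assume "x \<in> {x. right_limit X x} \<union> {x. left_limit X x}"
  then have "x \<in> X \<and> (\<forall>n. \<exists>v\<in>X. v \<noteq> x \<and> agree n v x)"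
    unfolding right_limit_def left_limit_def by fastforce
  then show "x \<in> CB_derivative S X" using CB_derivative_iff[OF assms] by blast
qed

definition reflect :: "(int \<Rightarrow> 'a) \<Rightarrow> (int \<Rightarrow> 'a)" where
  "reflect x = (\<lambda>i. x (- i))"

lemma reflect_reflect [simp]: "reflect (reflect x) = x"
  by (simp add: reflect_def)

lemma agree_reflect [simp]: "agree n (reflect v) (reflect x) \<longleftrightarrow> agree n v x"
  unfolding agree_def reflect_def by (metis add.inverse_inverse minus_le_iff neg_le_iff_le)

lemma left_limit_reflect: "left_limit X x \<longleftrightarrow> right_limit (reflect ` X) (reflect x)"
proof -
  have "inj reflect" by (metis injI reflect_reflect)
  then have "reflect x \<in> reflect ` X \<longleftrightarrow> x \<in> X" by (rule inj_image_mem_iff)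
  moreover have "(\<exists>d > int n. reflect v d \<noteq> reflect x d) \<longleftrightarrow> (\<exists>d < - int n. v d \<noteq> x d)" for n v
    unfolding reflect_def by (metis add.inverse_inverse neg_less_iff_less)
  moreover have "(\<exists>w\<in>reflect ` X. P w) \<longleftrightarrow> (\<exists>v\<in>X. P (reflect v))" for P by blast
  ultimately show ?thesis unfolding left_limit_def right_limit_def by (simp only: agree_reflect)
qed

lemma left_limits_eq: "{x. left_limit X x} = reflect ` {y. right_limit (reflect ` X) y}"
proof -
  have "{x. left_limit X x} = reflect ` reflect ` {x. left_limit X x}" by (simp add: image_image)
  also have "reflect ` {x. left_limit X x} = {y. right_limit (reflect ` X) y}"
    unfolding left_limit_reflect by (auto simp: image_def) (metis reflect_reflect)
  finally show ?thesis .
qed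

lemma reflect_gshift_subset: "reflect ` gshift T l \<subseteq> gshift (converse T) l"
proof
  fix y assume "y \<in> reflect ` gshift T l"
  then obtain s where s: "gpath T s" "y = reflect (\<lambda>i. l (s i))" unfolding gshift_def by blast
  have "(s (- i - 1), s (- i - 1 + 1)) \<in> T" for i using s(1) unfolding gpath_def by blast
  then have "gpath (converse T) (reflect s)" unfolding gpath_def reflect_def by simp
  moreover have "y = (\<lambda>i. l (reflect s i))" using s(2) by (simp add: reflect_def)
  ultimately show "y \<in> gshift (converse T) l" unfolding gshift_def by blast
qed

lemma reflect_gshift: "reflect ` gshift T l = gshift (converse T) l"
proof
  have "gshift (converse T) l = reflect ` reflect ` gshift (converse T) l" by (simp add: image_image)
  also have "\<dots> \<subseteq> reflect ` gshift (converse (converse T)) l"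
    using reflect_gshift_subset by blast
  finally show "gshift (converse T) l \<subseteq> reflect ` gshift T l" by simp
qed (rule reflect_gshift_subset)

lemma gpath_disjoint_union:
  assumes "gpath (map_prod Inl Inl ` T1 \<union> map_prod Inr Inr ` T2) u"
  shows "(\<exists>s. gpath T1 s \<and> u = (\<lambda>i. Inl (s i))) \<or> (\<exists>s. gpath T2 s \<and> u = (\<lambda>i. Inr (s i)))"
proof -
  let ?T = "map_prod Inl Inl ` T1 \<union> map_prod Inr Inr ` T2"
  have edge: "(u i, u (i + 1)) \<in> ?T" for i using assms unfolding gpath_def by blast
  have side: "isl (u i) = isl (u 0)" for i
  proof (induction i rule: int_induct[where k = 0])
    case (step1 i) then show ?case using edge[of i] by auto
  next
    case (step2 i) then show ?case using edge[of "i - 1"] by auto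
  qed simp
  show ?thesis
  proof (cases "isl (u 0)")
    case True
    then have u: "u i = Inl (projl (u i))" for i using side[of i] by (cases "u i") auto
    have "(projl (u i), projl (u (i + 1))) \<in> T1" for i
      using edge[of i] u[of i] u[of "i + 1"] by auto
    then have "gpath T1 (\<lambda>i. projl (u i))" unfolding gpath_def by blast
    moreover have "u = (\<lambda>i. Inl (projl (u i)))" using u by blast
    ultimately show ?thesis by blast
  next
    case False
    then have u: "u i = Inr (projr (u i))" for i using side[of i] by (cases "u i") auto
    have "(projr (u i), projr (u (i + 1))) \<in> T2" for i
      using edge[of i] u[of i] u[of "i + 1"] by auto
    then have "gpath T2 (\<lambda>i. projr (u i))" unfolding gpath_def by blast
    moreover have "u = (\<lambda>i. Inr (projr (u i)))" using u by blast
    ultimately show ?thesis by blast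
  qed
qed

lemma gshift_union:
  "gshift T1 l1 \<union> gshift T2 l2 = gshift (map_prod Inl Inl ` T1 \<union> map_prod Inr Inr ` T2) (case_sum l1 l2)"
  (is "_ = gshift ?T ?l")
proof
  show "gshift T1 l1 \<union> gshift T2 l2 \<subseteq> gshift ?T ?l"
  proof
    fix x assume "x \<in> gshift T1 l1 \<union> gshift T2 l2"
    then consider s where "gpath T1 s" "x = (\<lambda>i. l1 (s i))" | s where "gpath T2 s" "x = (\<lambda>i. l2 (s i))"
      unfolding gshift_def by blast
    then show "x \<in> gshift ?T ?l"
    proof cases
      case 1
      then have "gpath ?T (\<lambda>i. Inl (s i))" unfolding gpath_def by auto
      then show ?thesis using 1(2) unfolding gshift_def by force
    next
      case 2
      then have "gpath ?T (\<lambda>i. Inr (s i))" unfolding gpath_def by auto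
      then show ?thesis using 2(2) unfolding gshift_def by force
    qed
  qed
  show "gshift ?T ?l \<subseteq> gshift T1 l1 \<union> gshift T2 l2"
  proof
    fix x assume "x \<in> gshift ?T ?l"
    then obtain u where u: "gpath ?T u" "x = (\<lambda>i. ?l (u i))" unfolding gshift_def by blast
    from gpath_disjoint_union[OF u(1)] show "x \<in> gshift T1 l1 \<union> gshift T2 l2"
      unfolding gshift_def u(2) by auto
  qed
qed

definition separable :: "('q \<times> 'q) set \<Rightarrow> ('q \<Rightarrow> 'b) \<Rightarrow> ('q \<times> 'q) set" where
  "separable T l = {(p, q). \<exists>\<sigma> \<tau> j. gpath T \<sigma> \<and> gpath T \<tau> \<and> \<sigma> 0 = p \<and> \<tau> 0 = q \<and> j \<ge> 0 \<and> l (\<sigma> j) \<noteq> l (\<tau> j)}"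

text \<open>The graph of pairs of equally labelled, separable states; its label sequences will be
exactly the right limit points of the graph shift.\<close>
definition pair_graph :: "('q \<times> 'q) set \<Rightarrow> ('q \<Rightarrow> 'b) \<Rightarrow> (('q \<times> 'q) \<times> ('q \<times> 'q)) set" where
  "pair_graph T l = {((p, q), (p', q')). (p, p') \<in> T \<and> (q, q') \<in> T \<and> (p, q) \<in> separable T l \<and> l p = l q}"

lemma finite_pair_graph: "finite T \<Longrightarrow> finite (pair_graph T l)"
proof -
  assume "finite T"
  have "pair_graph T l \<subseteq> (\<lambda>((p, p'), (q, q')). ((p, q), (p', q'))) ` (T \<times> T)"
  proof
    fix z assume "z \<in> pair_graph T l"
    then obtain p q p' q' where z: "z = ((p, q), (p', q'))" "(p, p') \<in> T" "(q, q') \<in> T"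
      unfolding pair_graph_def by auto
    show "z \<in> (\<lambda>((p, p'), (q, q')). ((p, q), (p', q'))) ` (T \<times> T)"
      by (rule image_eqI[where x = "((p, p'), (q, q'))"]) (use z in auto)
  qed
  then show ?thesis using \<open>finite T\<close> finite_subset by blast
qed

definition glue :: "int \<Rightarrow> (int \<Rightarrow> 'a) \<Rightarrow> (int \<Rightarrow> 'a) \<Rightarrow> (int \<Rightarrow> 'a)" where
  "glue n s \<sigma> = (\<lambda>i. if i \<le> n then s i else \<sigma> (i - n))"

lemma gpath_glue:
  assumes "gpath T s" "gpath T \<sigma>" "\<sigma> 0 = s n"
  shows "gpath T (glue n s \<sigma>)"
  unfolding gpath_def
proof
  fix i
  consider "i < n" | "i = n" | "i > n" by linarith
  then show "(glue n s \<sigma> i, glue n s \<sigma> (i + 1)) \<in> T"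
  proof cases
    case 1 then show ?thesis using assms(1) unfolding gpath_def glue_def by auto
  next
    case 2
    have "(\<sigma> 0, \<sigma> (0 + 1)) \<in> T" using assms(2) unfolding gpath_def by blast
    then show ?thesis using 2 assms(3) unfolding glue_def by simp
  next
    case 3
    have "(\<sigma> (i - n), \<sigma> (i - n + 1)) \<in> T" using assms(2) unfolding gpath_def by blast
    then show ?thesis using 3 unfolding glue_def by (simp add: algebra_simps)
  qed
qed

text \<open>A pair of equally labelled paths through separable pairs yields a right limit point:
at time n, redirect one of the two paths to where the futures differ.\<close>
lemma right_limit_of_pair_path:
  assumes s: "gpath T s" and t: "gpath T t" and same: "\<And>i. l (s i) = l (t i)"
    and sep: "\<And>i. (s i, t i) \<in> separable T l"
  shows "right_limit (gshift T l) (\<lambda>i. l (s i))"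
  unfolding right_limit_def
proof (intro conjI allI)
  let ?x = "\<lambda>i. l (s i)"
  show "?x \<in> gshift T l" using s unfolding gshift_def by blast
  fix n :: nat
  have "\<exists>\<sigma> \<tau> j. gpath T \<sigma> \<and> gpath T \<tau> \<and> \<sigma> 0 = s n \<and> \<tau> 0 = t n \<and> j \<ge> 0 \<and> l (\<sigma> j) \<noteq> l (\<tau> j)"
    using sep[of n] unfolding separable_def by simp
  then obtain \<sigma> \<tau> j where st: "gpath T \<sigma>" "gpath T \<tau>" "\<sigma> 0 = s n" "\<tau> 0 = t n" "j \<ge> 0"
      "l (\<sigma> j) \<noteq> l (\<tau> j)"
    by blast
  have "j \<noteq> 0" using st same[of n] by auto
  then have j: "j > 0" using st(5) by simp
  define s' where "s' = glue n s \<sigma>"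
  define t' where "t' = glue n t \<tau>"
  have paths: "gpath T s'" "gpath T t'"
    unfolding s'_def t'_def using gpath_glue[OF s st(1,3)] gpath_glue[OF t st(2,4)] by blast+
  have agree: "agree n (\<lambda>i. l (s' i)) ?x" "agree n (\<lambda>i. l (t' i)) ?x"
    unfolding s'_def t'_def glue_def agree_def using same by auto
  have "s' (n + j) = \<sigma> j" "t' (n + j) = \<tau> j" unfolding s'_def t'_def glue_def using j by auto
  then consider "l (s' (n + j)) \<noteq> ?x (n + j)" | "l (t' (n + j)) \<noteq> ?x (n + j)" using st(6) by metis
  moreover have "(\<lambda>i. l (s' i)) \<in> gshift T l" "(\<lambda>i. l (t' i)) \<in> gshift T l"
    using paths unfolding gshift_def by blast+
  moreover have "n + j > int n" using j by simp
  ultimately show "\<exists>v\<in>gshift T l. agree n v ?x \<and> (\<exists>d > int n. v d \<noteq> ?x d)"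
  proof cases
    case 1
    then show ?thesis using agree(1) \<open>n + j > int n\<close> \<open>(\<lambda>i. l (s' i)) \<in> gshift T l\<close>
      by (intro bexI[of _ "\<lambda>i. l (s' i)"] conjI exI[of _ "n + j"]) auto
  next
    case 2
    then show ?thesis using agree(2) \<open>n + j > int n\<close> \<open>(\<lambda>i. l (t' i)) \<in> gshift T l\<close>
      by (intro bexI[of _ "\<lambda>i. l (t' i)"] conjI exI[of _ "n + j"]) auto
  qed
qed

text \<open>Conversely, by Koenig's lemma a right limit point is carried by a pair of equally labelled
paths through separable pairs.\<close>
lemma pair_path_of_right_limit:
  assumes fin: "finite T" and R: "right_limit (gshift T l) x"
  obtains s t where "gpath T s" "gpath T t" "x = (\<lambda>i. l (s i))" "\<And>i. l (t i) = x i"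
    "\<And>i. (s i, t i) \<in> separable T l"
proof -
  obtain s where s: "gpath T s" "x = (\<lambda>i. l (s i))" using R unfolding right_limit_def gshift_def by blast
  let ?P = "\<lambda>i a b. (a, b) \<in> T \<and> l a = x i \<and> (s i, a) \<in> separable T l"
  have "\<exists>t. (\<forall>i. t i \<in> Domain T) \<and> (\<forall>i. - int n \<le> i \<and> i \<le> int n \<longrightarrow> ?P i (t i) (t (i + 1)))"
    for n :: nat
  proof -
    obtain v d where v: "v \<in> gshift T l" "agree n v x" "d > int n" "v d \<noteq> x d"
      using R unfolding right_limit_def by blast
    obtain t where t: "gpath T t" "v = (\<lambda>i. l (t i))" using v(1) unfolding gshift_def by blast
    have "?P i (t i) (t (i + 1))" if i: "- int n \<le> i" "i \<le> int n" for i
    proof (intro conjI)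
      show "(t i, t (i + 1)) \<in> T" using t(1) unfolding gpath_def by blast
      show "l (t i) = x i" using agreeD[OF v(2) i] t(2) by simp
      have "l (translate i s (d - i)) \<noteq> l (translate i t (d - i))"
        using v(4) s(2) t(2) by (simp add: translate_def)
      moreover have "translate i s 0 = s i" "translate i t 0 = t i" "d - i \<ge> 0"
        using i v(3) by (simp_all add: translate_def)
      ultimately show "(s i, t i) \<in> separable T l"
        unfolding separable_def using gpath_translate[OF s(1)] gpath_translate[OF t(1)] by blast
    qed
    then show ?thesis using gpath_Domain[OF t(1)] by blast
  qed
  then obtain t where t: "\<And>i. ?P i (t i) (t (i + 1))"
    using konig_bi_infinite_path[of "Domain T" ?P] fin by (metis finite_Domain)
  have "gpath T t" using t unfolding gpath_def by blast
  then show ?thesis using that s t by blast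
qed

theorem right_limits_gshift:
  assumes "finite T"
  shows "{x. right_limit (gshift T l) x} = gshift (pair_graph T l) (\<lambda>pq. l (fst pq))"
proof
  show "{x. right_limit (gshift T l) x} \<subseteq> gshift (pair_graph T l) (\<lambda>pq. l (fst pq))"
  proof
    fix x assume "x \<in> {x. right_limit (gshift T l) x}"
    then obtain s t where st: "gpath T s" "gpath T t" "x = (\<lambda>i. l (s i))" "\<And>i. l (t i) = x i"
        "\<And>i. (s i, t i) \<in> separable T l"
      using pair_path_of_right_limit[OF assms] by blast
    have "gpath (pair_graph T l) (\<lambda>i. (s i, t i))"
      using st unfolding gpath_def pair_graph_def by auto
    then show "x \<in> gshift (pair_graph T l) (\<lambda>pq. l (fst pq))"
      unfolding gshift_def using st(3) by force
  qed
  show "gshift (pair_graph T l) (\<lambda>pq. l (fst pq)) \<subseteq> {x. right_limit (gshift T l) x}"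
  proof
    fix x assume "x \<in> gshift (pair_graph T l) (\<lambda>pq. l (fst pq))"
    then obtain u where u: "gpath (pair_graph T l) u" "x = (\<lambda>i. l (fst (u i)))"
      unfolding gshift_def by blast
    have edge: "((fst (u i), snd (u i)), (fst (u (i + 1)), snd (u (i + 1)))) \<in> pair_graph T l" for i
      using u(1) unfolding gpath_def by simp
    have "right_limit (gshift T l) (\<lambda>i. l (fst (u i)))"
    proof (rule right_limit_of_pair_path)
      show "gpath T (\<lambda>i. fst (u i))" "gpath T (\<lambda>i. snd (u i))"
        using edge unfolding gpath_def pair_graph_def by (auto simp: split_beta)
      show "l (fst (u i)) = l (snd (u i))" "(fst (u i), snd (u i)) \<in> separable T l" for i
        using edge[of i] unfolding pair_graph_def by auto
    qed
    then show "x \<in> {x. right_limit (gshift T l) x}" using u(2) by simp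
  qed
qed

lemma CB_derivative_gshift:
  assumes fin: "finite T" and lab: "l ` Domain T \<subseteq> S"
  defines "l2 \<equiv> \<lambda>pq. l (fst pq)"
  shows "CB_derivative S (gshift T l) = gshift (map_prod Inl Inl ` pair_graph T l \<union>
    map_prod Inr Inr ` converse (pair_graph (converse T) l)) (case_sum l2 l2)"
proof -
  have "{x. left_limit (gshift T l) x} = reflect ` {y. right_limit (gshift (converse T) l) y}"
    unfolding left_limits_eq reflect_gshift ..
  also have "\<dots> = reflect ` gshift (pair_graph (converse T) l) l2"
    using right_limits_gshift[of "converse T" l] fin unfolding l2_def by simp
  also have "\<dots> = gshift (converse (pair_graph (converse T) l)) l2" by (rule reflect_gshift)
  finally have left: "{x. left_limit (gshift T l) x} = gshift (converse (pair_graph (converse T) l)) l2" .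
  have right: "{x. right_limit (gshift T l) x} = gshift (pair_graph T l) l2"
    unfolding l2_def by (rule right_limits_gshift[OF fin])
  show ?thesis
    unfolding CB_derivative_eq_limits[OF gshift_subset_topspace[OF lab]] left right
    by (rule gshift_union)
qed

lemma sofic_CB_derivative_gshift:
  fixes T :: "('q::countable \<times> 'q) set"
  assumes "finite T" "l ` Domain T \<subseteq> S"
  shows "sofic S (CB_derivative S (gshift T l))"
  unfolding CB_derivative_gshift[OF assms]
proof (rule gshift_sofic)
  show "finite (map_prod Inl Inl ` pair_graph T l \<union> map_prod Inr Inr ` converse (pair_graph (converse T) l))"
    using finite_pair_graph assms(1) by auto
  show "case_sum (\<lambda>pq. l (fst pq)) (\<lambda>pq. l (fst pq)) `
      Domain (map_prod Inl Inl ` pair_graph T l \<union> map_prod Inr Inr ` converse (pair_graph (converse T) l)) \<subseteq> S"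
    using assms(2) unfolding pair_graph_def by (auto simp: image_subset_iff)
qed

theorem corollary4:
  fixes S :: "'a set" and X :: "(int \<Rightarrow> 'a) set"
  assumes "finite S"
    and "sofic S X"
  shows "sofic S (CB_derivative S X)"
proof -
  obtain T :: "(nat list \<times> nat list) set" and l where "finite T" "l ` Domain T \<subseteq> S" "X = gshift T l"
    using sofic_graph_presentation[OF assms(2)] by blast
  then show ?thesis using sofic_CB_derivative_gshift by blast
qed

end
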